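(* Let $\mathcal C\subseteq\{0,1\}^n$ and $\mathcal D\subseteq\{0,1\}^m$ be neural codes and let $\phi:R_\mathcal D\to R_\mathcal C$ be a ring homomorphism. (i) There exists a ring homomorphism $\tau:R[m]\to R[n]$ which is compatible with $\phi$; thus $\phi$ is an $R[m]$-module homomorphism (with $R_\mathcal C$ viewed as an $R[m]$-module via $\tau$). (ii) The set of ring homomorphisms $\tau:R[m]\to R[n]$ compatible with $\phi$ is exactly the set of ring homomorphisms $\tau:R[m]\to R[n]$ such that $(\phi(f))^{-1}(1)\subseteq(\tau(f))^{-1}(1)$ for all $f\in R_\mathcal D$.
   Context: For a code $\mathcal C\subseteq\{0,1\}^n$, the neural ring $R_\mathcal C=\mathbb F_2[x_1,\dots,x_n]/I_\mathcal C$, where $I_\mathcal C$ is the ideal of polynomials vanishing on $\mathcal C$, is identified with the ring of all functions $\mathcal C\to\{0,1\}=\mathbb F_2$. $R[n]$ denotes the neural ring of the full code $\{0,1\}^n$, i.e. $\mathbb F_2[x_1,\dots,x_n]/\langle x_i^2-x_i\rangle$, the ring of all functions $\{0,1\}^n\to\{0,1\}$. $R_\mathcal C$ is an $R[n]$-module via $(r\cdot f)(c)=r(c)f(c)$. An element $f\in R_\mathcal D$ (a function on $\mathcal D\subseteq\{0,1\}^m$) is also regarded as an element of $R[m]$, namely the function on $\{0,1\}^m$ that is $1$ exactly on $f^{-1}(1)$; in particular $\tau(f)$ makes sense for $\tau:R[m]\to R[n]$. A ring homomorphism $\tau:R[m]\to R[n]$ is compatible with a group homomorphism $\phi:R_\mathcal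 D\to R_\mathcal C$ if $\phi(r\cdot f)=\tau(r)\cdot\phi(f)$ for all $r\in R[m]$, $f\in R_\mathcal D$, i.e. $\phi$ is an $R[m]$-module homomorphism when $R_\mathcal C$ is made an $R[m]$-module via $r\cdot g=\tau(r)\cdot g$. *)

theory Defs
  imports "HOL-Algebra.Ring" "HOL-Algebra.RingHom"
begin

text \<open>Codewords in {0,1}^n are boolean lists of length n (True = 1).\<close>
definition cube :: "nat \<Rightarrow> bool list set" where
  "cube n = {xs. length xs = n}"

text \<open>The neural ring R_C: functions C \<rightarrow> F2, represented as functions on all
  bool lists that vanish (are False) outside C.  Thus an element of R_D is
  literally identified with the function on {0,1}^m that is 1 exactly on f^{-1}(1).\<close>
definition neural_ring :: "bool list set \<Rightarrow> (bool list \<Rightarrow> bool) ring" where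
  "neural_ring C = \<lparr> carrier = {f. \<forall>x. x \<notin> C \<longrightarrow> \<not> f x},
                     monoid.mult = (\<lambda>f g x. f x \<and> g x),
                     one = (\<lambda>x. x \<in> C),
                     zero = (\<lambda>x. False),
                     add = (\<lambda>f g x. f x \<noteq> g x) \<rparr>"

definition full_ring :: "nat \<Rightarrow> (bool list \<Rightarrow> bool) ring" where
  "full_ring n = neural_ring (cube n)"

definition code_act :: "(bool list \<Rightarrow> bool) \<Rightarrow> (bool list \<Rightarrow> bool) \<Rightarrow> (bool list \<Rightarrow> bool)" where
  "code_act r f = (\<lambda>c. r c \<and> f c)"

definition compatible ::
  "nat \<Rightarrow> bool list set \<Rightarrow> ((bool list \<Rightarrow> bool) \<Rightarrow> (bool list \<Rightarrow> bool))
    \<Rightarrow> ((bool list \<Rightarrow> bool) \<Rightarrow> (bool list \<Rightarrow> bool)) \<Rightarrow> bool" where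
  "compatible m D \<tau> \<phi> \<longleftrightarrow>
     (\<forall>r \<in> carrier (full_ring m). \<forall>f \<in> carrier (neural_ring D).
        \<phi> (code_act r f) = code_act (\<tau> r) (\<phi> f))"

end

theory Submission
  imports Defs
begin

text \<open>
  Elements of a neural ring are indicator functions, so they are ordered pointwise
  (\<open>f \<le> g\<close> means \<open>f\<^sup>-\<^sup>1(1) \<subseteq> g\<^sup>-\<^sup>1(1)\<close>), and a ring homomorphism between neural rings preserves
  products (meets), hence this order, and also joins, since \<open>f \<or> g = f + g + fg\<close>.
  Compatibility \<open>\<phi>(r f) = \<tau>(r) \<phi>(f)\<close> specialises at \<open>r = f\<close> to \<open>\<phi>(f) \<le> \<tau>(f)\<close>.
  Conversely, if \<open>\<phi> \<le> \<tau>\<close> on \<open>R\<^sub>D\<close>, split \<open>f = rf \<or> (1 - r)f\<close>: then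
  \<open>\<phi>(rf) \<le> \<phi>(f)\<close> and \<open>\<phi>(rf) \<le> \<tau>(rf) \<le> \<tau>(r)\<close>, while \<open>\<phi>((1 - r)f) \<le> \<tau>((1 - r)f)\<close> is disjoint
  from \<open>\<tau>(r)\<close>; together \<open>\<phi>(rf) = \<tau>(r) \<phi>(f)\<close>.
  A compatible \<open>\<tau>\<close> exists: on \<open>c \<in> C\<close> let \<open>\<tau>(r)(c) = \<phi>(r|\<^sub>D)(c)\<close>, and on the remaining
  points of \<open>{0,1}\<^sup>n\<close> evaluate \<open>r\<close> at a fixed point of \<open>{0,1}\<^sup>m\<close>.
\<close>

lemma carrier_neural_ring: "f \<in> carrier (neural_ring A) \<longleftrightarrow> (\<forall>x. f x \<longrightarrow> x \<in> A)"
  by (auto simp: neural_ring_def)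

lemma neural_ring_homI:
  assumes "\<And>f. f \<in> carrier (neural_ring A) \<Longrightarrow> h f \<in> carrier (neural_ring B)"
    and "\<And>f g. f \<in> carrier (neural_ring A) \<Longrightarrow> g \<in> carrier (neural_ring A) \<Longrightarrow>
           h (\<lambda>x. f x \<and> g x) = (\<lambda>x. h f x \<and> h g x)"
    and "\<And>f g. f \<in> carrier (neural_ring A) \<Longrightarrow> g \<in> carrier (neural_ring A) \<Longrightarrow>
           h (\<lambda>x. f x \<noteq> g x) = (\<lambda>x. h f x \<noteq> h g x)"
    and "h (\<lambda>x. x \<in> A) = (\<lambda>x. x \<in> B)"
  shows "h \<in> ring_hom (neural_ring A) (neural_ring B)"
  using assms by (intro ring_hom_memI) (simp_all add: neural_ring_def)

context
  fixes h A B
  assumes hom: "h \<in> ring_hom (neural_ring A) (neural_ring B)"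
begin

lemma neural_ring_hom_closed: "f \<in> carrier (neural_ring A) \<Longrightarrow> h f \<in> carrier (neural_ring B)"
  using hom by (rule ring_hom_closed)

lemma neural_ring_hom_conj:
  "f \<in> carrier (neural_ring A) \<Longrightarrow> g \<in> carrier (neural_ring A) \<Longrightarrow>
     h (\<lambda>x. f x \<and> g x) = (\<lambda>x. h f x \<and> h g x)"
  using ring_hom_mult[OF hom] by (simp add: neural_ring_def)

lemma neural_ring_hom_xor:
  "f \<in> carrier (neural_ring A) \<Longrightarrow> g \<in> carrier (neural_ring A) \<Longrightarrow>
     h (\<lambda>x. f x \<noteq> g x) = (\<lambda>x. h f x \<noteq> h g x)"
  using ring_hom_add[OF hom] by (simp add: neural_ring_def)

lemma neural_ring_hom_one: "h (\<lambda>x. x \<in> A) = (\<lambda>x. x \<in> B)"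
  using ring_hom_one[OF hom] by (simp add: neural_ring_def)

lemma neural_ring_hom_False: "h (\<lambda>x. False) = (\<lambda>x. False)"
  using neural_ring_hom_xor[of "\<lambda>x. False" "\<lambda>x. False"] by (simp add: carrier_neural_ring)

lemma neural_ring_hom_disj:
  assumes f: "f \<in> carrier (neural_ring A)" and g: "g \<in> carrier (neural_ring A)"
  shows "h (\<lambda>x. f x \<or> g x) = (\<lambda>x. h f x \<or> h g x)"
proof -
  let ?fg = "\<lambda>x. f x \<and> g x" and ?f_xor_g = "\<lambda>x. f x \<noteq> g x"
  have closed: "?fg \<in> carrier (neural_ring A)" "?f_xor_g \<in> carrier (neural_ring A)"
    using f g by (auto simp: carrier_neural_ring)
  have "(\<lambda>x. f x \<or> g x) = (\<lambda>x. ?f_xor_g x \<noteq> ?fg x)"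
    by auto
  then have "h (\<lambda>x. f x \<or> g x) = (\<lambda>x. h ?f_xor_g x \<noteq> h ?fg x)"
    by (simp only: neural_ring_hom_xor[OF closed(2,1)])
  also have "\<dots> = (\<lambda>x. h f x \<or> h g x)"
    unfolding neural_ring_hom_xor[OF f g] neural_ring_hom_conj[OF f g] by auto
  finally show ?thesis .
qed

lemma neural_ring_hom_mono:
  assumes f: "f \<in> carrier (neural_ring A)" and g: "g \<in> carrier (neural_ring A)"
    and "f \<le> g"
  shows "h f \<le> h g"
proof -
  have "(\<lambda>x. h f x \<and> h g x) = h (\<lambda>x. f x \<and> g x)"
    by (rule neural_ring_hom_conj[OF f g, symmetric])
  also have "(\<lambda>x. f x \<and> g x) = f"
    using \<open>f \<le> g\<close> by (auto simp: le_fun_def fun_eq_iff)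
  finally show ?thesis
    by (auto simp: le_fun_def fun_eq_iff)
qed

end

lemma compatible_action_if_le:
  assumes D: "D \<subseteq> cube m"
    and \<phi>: "\<phi> \<in> ring_hom (neural_ring D) (neural_ring C)"
    and \<tau>: "\<tau> \<in> ring_hom (full_ring m) (full_ring n)"
    and le: "\<forall>f \<in> carrier (neural_ring D). \<phi> f \<le> \<tau> f"
    and r: "r \<in> carrier (full_ring m)" and f: "f \<in> carrier (neural_ring D)"
  shows "\<phi> (code_act r f) = code_act (\<tau> r) (\<phi> f)"
proof -
  define inside where "inside = (\<lambda>x. f x \<and> r x)"
  define outside where "outside = (\<lambda>x. f x \<and> \<not> r x)"
  have \<tau>': "\<tau> \<in> ring_hom (neural_ring (cube m)) (neural_ring (cube n))"
    and r': "r \<in> carrier (neural_ring (cube m))"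
    using \<tau> r by (simp_all add: full_ring_def)
  have in_D: "inside \<in> carrier (neural_ring D)" "outside \<in> carrier (neural_ring D)"
    using f by (auto simp: carrier_neural_ring inside_def outside_def)
  then have in_cube: "inside \<in> carrier (neural_ring (cube m))"
    "outside \<in> carrier (neural_ring (cube m))"
    using D by (auto simp: carrier_neural_ring)
  have "\<phi> inside \<le> \<phi> f"
    by (rule neural_ring_hom_mono[OF \<phi> in_D(1) f]) (simp add: inside_def le_fun_def)
  moreover have "\<phi> inside \<le> \<tau> r"
  proof -
    have "\<phi> inside \<le> \<tau> inside"
      using le in_D(1) by blast
    also have "\<tau> inside \<le> \<tau> r"
      by (rule neural_ring_hom_mono[OF \<tau>' in_cube(1) r']) (simp add: inside_def le_fun_def)
    finally show ?thesis .
  qed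
  moreover have "\<phi> f = (\<lambda>c. \<phi> inside c \<or> \<phi> outside c)"
  proof -
    have "\<phi> f = \<phi> (\<lambda>x. inside x \<or> outside x)"
      by (rule arg_cong[where f = \<phi>]) (auto simp: inside_def outside_def)
    also have "\<dots> = (\<lambda>c. \<phi> inside c \<or> \<phi> outside c)"
      by (rule neural_ring_hom_disj[OF \<phi> in_D])
    finally show ?thesis .
  qed
  moreover have "\<phi> outside \<le> \<tau> outside"
    using le in_D(2) by blast
  moreover have "(\<lambda>c. \<tau> outside c \<and> \<tau> r c) = \<tau> (\<lambda>x. False)"
    by (rule trans[OF neural_ring_hom_conj[OF \<tau>' in_cube(2) r', symmetric] arg_cong[where f = \<tau>]])
      (auto simp: outside_def)
  ultimately have "\<phi> inside = (\<lambda>c. \<tau> r c \<and> \<phi> f c)"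
    by (auto simp: neural_ring_hom_False[OF \<tau>'] le_fun_def fun_eq_iff)
  then show ?thesis
    by (simp add: code_act_def inside_def conj_commute)
qed

lemma compatible_iff_le:
  assumes D: "D \<subseteq> cube m"
    and \<phi>: "\<phi> \<in> ring_hom (neural_ring D) (neural_ring C)"
    and \<tau>: "\<tau> \<in> ring_hom (full_ring m) (full_ring n)"
  shows "compatible m D \<tau> \<phi> \<longleftrightarrow> (\<forall>f \<in> carrier (neural_ring D). \<phi> f \<le> \<tau> f)"
proof
  assume compatible: "compatible m D \<tau> \<phi>"
  show "\<forall>f \<in> carrier (neural_ring D). \<phi> f \<le> \<tau> f"
  proof
    fix f assume f: "f \<in> carrier (neural_ring D)"
    then have "f \<in> carrier (full_ring m)"
      using D by (auto simp: full_ring_def carrier_neural_ring)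
    then have "code_act (\<tau> f) (\<phi> f) = \<phi> (code_act f f)"
      using compatible f by (simp add: compatible_def)
    also have "code_act f f = f"
      by (simp add: code_act_def)
    finally show "\<phi> f \<le> \<tau> f"
      by (auto simp: code_act_def le_fun_def fun_eq_iff)
  qed
next
  assume "\<forall>f \<in> carrier (neural_ring D). \<phi> f \<le> \<tau> f"
  then show "compatible m D \<tau> \<phi>"
    unfolding compatible_def using compatible_action_if_le[OF D \<phi> \<tau>] by blast
qed

definition hom_extension ::
  "nat \<Rightarrow> bool list set \<Rightarrow> bool list set \<Rightarrow> bool list
    \<Rightarrow> ((bool list \<Rightarrow> bool) \<Rightarrow> (bool list \<Rightarrow> bool)) \<Rightarrow> (bool list \<Rightarrow> bool) \<Rightarrow> (bool list \<Rightarrow> bool)"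
  where "hom_extension n C D d \<phi> r c =
    (if c \<in> C then \<phi> (\<lambda>x. r x \<and> x \<in> D) c else c \<in> cube n \<and> r d)"

lemma hom_extension_ring_hom:
  assumes C: "C \<subseteq> cube n" and D: "D \<subseteq> cube m" and d: "d \<in> cube m"
    and \<phi>: "\<phi> \<in> ring_hom (neural_ring D) (neural_ring C)"
  shows "hom_extension n C D d \<phi> \<in> ring_hom (full_ring m) (full_ring n)"
  unfolding full_ring_def
proof (rule neural_ring_homI)
  have restrict_closed: "(\<lambda>x. r x \<and> x \<in> D) \<in> carrier (neural_ring D)" for r :: "bool list \<Rightarrow> bool"
    by (simp add: carrier_neural_ring)
  show "hom_extension n C D d \<phi> r \<in> carrier (neural_ring (cube n))" for r
    using C by (auto simp: carrier_neural_ring hom_extension_def)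
  show "hom_extension n C D d \<phi> (\<lambda>x. r x \<and> s x) =
      (\<lambda>x. hom_extension n C D d \<phi> r x \<and> hom_extension n C D d \<phi> s x)" for r s
  proof -
    have "(\<lambda>x. (r x \<and> s x) \<and> x \<in> D) = (\<lambda>x. (r x \<and> x \<in> D) \<and> (s x \<and> x \<in> D))"
      by auto
    then show ?thesis
      using neural_ring_hom_conj[OF \<phi> restrict_closed restrict_closed]
      by (auto simp: hom_extension_def fun_eq_iff)
  qed
  show "hom_extension n C D d \<phi> (\<lambda>x. r x \<noteq> s x) =
      (\<lambda>x. hom_extension n C D d \<phi> r x \<noteq> hom_extension n C D d \<phi> s x)" for r s
  proof -
    have "(\<lambda>x. (r x \<noteq> s x) \<and> x \<in> D) = (\<lambda>x. (r x \<and> x \<in> D) \<noteq> (s x \<and> x \<in> D))"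
      by auto
    then show ?thesis
      using neural_ring_hom_xor[OF \<phi> restrict_closed restrict_closed]
      by (auto simp: hom_extension_def fun_eq_iff)
  qed
  have "(\<lambda>x. x \<in> cube m \<and> x \<in> D) = (\<lambda>x. x \<in> D)"
    using D by auto
  then show "hom_extension n C D d \<phi> (\<lambda>x. x \<in> cube m) = (\<lambda>x. x \<in> cube n)"
    using neural_ring_hom_one[OF \<phi>] C d by (auto simp: hom_extension_def fun_eq_iff)
qed

lemma hom_extension_ge:
  assumes \<phi>: "\<phi> \<in> ring_hom (neural_ring D) (neural_ring C)"
    and f: "f \<in> carrier (neural_ring D)"
  shows "\<phi> f \<le> hom_extension n C D d \<phi> f"
proof -
  have "\<phi> f c \<Longrightarrow> c \<in> C" for c
    using neural_ring_hom_closed[OF \<phi> f] by (simp add: carrier_neural_ring)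
  moreover have "(\<lambda>x. f x \<and> x \<in> D) = f"
    using f by (auto simp: carrier_neural_ring)
  ultimately show ?thesis
    by (auto simp: le_fun_def hom_extension_def)
qed

theorem theorem3:
  fixes n m :: nat and C D :: "bool list set"
    and \<phi> :: "(bool list \<Rightarrow> bool) \<Rightarrow> (bool list \<Rightarrow> bool)"
  assumes "C \<subseteq> cube n" and "D \<subseteq> cube m"
    and "\<phi> \<in> ring_hom (neural_ring D) (neural_ring C)"
  shows "(\<exists>\<tau>. \<tau> \<in> ring_hom (full_ring m) (full_ring n) \<and> compatible m D \<tau> \<phi>)
     \<and> {\<tau> \<in> ring_hom (full_ring m) (full_ring n). compatible m D \<tau> \<phi>}
       = {\<tau> \<in> ring_hom (full_ring m) (full_ring n).
            \<forall>f \<in> carrier (neural_ring D). {c. \<phi> f c} \<subseteq> {c. \<tau> f c}}"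
proof
  let ?\<tau> = "hom_extension n C D (replicate m False) \<phi>"
  have "?\<tau> \<in> ring_hom (full_ring m) (full_ring n)"
    using hom_extension_ring_hom[OF assms(1,2) _ assms(3)] by (simp add: cube_def)
  moreover have "compatible m D ?\<tau> \<phi>"
    using compatible_iff_le[OF assms(2,3) calculation] hom_extension_ge[OF assms(3)] by blast
  ultimately show "\<exists>\<tau>. \<tau> \<in> ring_hom (full_ring m) (full_ring n) \<and> compatible m D \<tau> \<phi>"
    by blast
  show "{\<tau> \<in> ring_hom (full_ring m) (full_ring n). compatible m D \<tau> \<phi>}
       = {\<tau> \<in> ring_hom (full_ring m) (full_ring n).
            \<forall>f \<in> carrier (neural_ring D). {c. \<phi> f c} \<subseteq> {c. \<tau> f c}}"
    using compatible_iff_le[OF assms(2,3)] by (auto simp: le_fun_def)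
qed

end
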